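(* Let $N\ge1$, $h\in(0,1)$, $\varepsilon\in(0,1/2]$, and let $\Phi$ be the opinion operator defined in the context. Then for every $V^0\in[-1,1]^N$ with nondecreasing components, the sequence $\Phi^n(V^0)$ converges as $n\to\infty$ to a fixed point of $\Phi$.
   Context: For $V=(v_1,\dots,v_N)\in[-1,1]^N$ and each $k$, let $J(v_k)=\{l\in\{1,\dots,N\}:|v_l-v_k|\le\varepsilon\}$ and $I(v_k)=|J(v_k)|$. Put $w_k(V)=v_k+\frac{h}{I(v_k)}\sum_{l\in J(v_k)}v_l$. Then $\Phi(V)=(v_1',\dots,v_N')$ where $v_k'=-1$ if $w_k<-1$, $v_k'=1$ if $w_k>1$, and $v_k'=w_k$ if $|w_k|\le1$. *)

theory Defs
  imports "HOL-Analysis.Analysis"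
begin

text \<open>Opinion vectors V = (v_1,...,v_N) are represented as real lists of length N
  (index k of the paper corresponds to list index k-1).\<close>

definition nbhd :: "real \<Rightarrow> real list \<Rightarrow> nat \<Rightarrow> nat set" where
  "nbhd \<epsilon> V k = {l. l < length V \<and> \<bar>V ! l - V ! k\<bar> \<le> \<epsilon>}"

definition wval :: "real \<Rightarrow> real \<Rightarrow> real list \<Rightarrow> nat \<Rightarrow> real" where
  "wval h \<epsilon> V k = V ! k + h / real (card (nbhd \<epsilon> V k)) * (\<Sum>l\<in>nbhd \<epsilon> V k. V ! l)"

definition clip :: "real \<Rightarrow> real" where
  "clip w = (if w < -1 then -1 else if w > 1 then 1 else w)"

definition Phi :: "real \<Rightarrow> real \<Rightarrow> real list \<Rightarrow> real list" where
  "Phi h \<epsilon> V = map (\<lambda>k. clip (wval h \<epsilon> V k)) [0..<length V]"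

end

theory Submission
  imports Defs
begin

(* Agents at +1 or -1 stay there, and an agent with |v| >= 1/2 is pushed outwards by at least
   h/(2N) per step; so every agent is either eventually pinned at +1 or -1, or stays in
   (-1/2, 1/2) forever ("free"). Free agents are never clipped, and averaging over ordered
   neighbourhoods makes the distance between two free agents nondecreasing. Hence all these
   distances converge and the neighbourhood relation among free agents eventually freezes into a
   symmetric relation. From then on the dynamics is linear, and the sum of the free opinions
   weighted by their cluster sizes is multiplied by 1 + h at each step; being bounded, it
   vanishes. Each free opinion is then a fixed combination of convergent differences, so it
   converges, and passing to the limit in the linear step shows that the limit is a fixed point. *)

lemma finite_nbhd: "finite (nbhd \<epsilon> V k)"
  unfolding nbhd_def by (rule finite_subset[of _ "{..<length V}"]) auto

lemma self_in_nbhd: "k < length V \<Longrightarrow> 0 \<le> \<epsilon> \<Longrightarrow> k \<in> nbhd \<epsilon> V k"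
  unfolding nbhd_def by auto

lemma card_nbhd_pos: "k < length V \<Longrightarrow> 0 \<le> \<epsilon> \<Longrightarrow> 0 < card (nbhd \<epsilon> V k)"
  using finite_nbhd self_in_nbhd card_gt_0_iff by blast

lemma card_nbhd_le: "card (nbhd \<epsilon> V k) \<le> length V"
  using card_mono[of "{..<length V}" "nbhd \<epsilon> V k"] unfolding nbhd_def by auto

lemma length_Phi [simp]: "length (Phi h \<epsilon> V) = length V"
  by (simp add: Phi_def)

lemma nth_Phi [simp]: "k < length V \<Longrightarrow> Phi h \<epsilon> V ! k = clip (wval h \<epsilon> V k)"
  by (simp add: Phi_def)

lemma clip_bounds: "-1 \<le> clip w" "clip w \<le> 1"
  by (simp_all add: clip_def)

lemma clip_eq_self: "\<bar>w\<bar> \<le> 1 \<Longrightarrow> clip w = w"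
  by (auto simp: clip_def)

lemma clip_uminus: "clip (- w) = - clip w"
  by (simp add: clip_def)

lemma set_Phi_bounded: "set (Phi h \<epsilon> V) \<subseteq> {-1..1}"
  by (auto simp: in_set_conv_nth clip_bounds)

lemma nbhd_uminus: "k < length V \<Longrightarrow> nbhd \<epsilon> (map uminus V) k = nbhd \<epsilon> V k"
  unfolding nbhd_def by (auto simp: abs_minus_commute)

lemma wval_uminus:
  assumes "k < length V"
  shows "wval h \<epsilon> (map uminus V) k = - wval h \<epsilon> V k"
proof -
  have "(\<Sum>l\<in>nbhd \<epsilon> V k. map uminus V ! l) = - (\<Sum>l\<in>nbhd \<epsilon> V k. V ! l)"
    by (simp add: nbhd_def sum_negf[symmetric])
  then show ?thesis
    unfolding wval_def using assms by (simp add: nbhd_uminus)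
qed

lemma Phi_uminus: "Phi h \<epsilon> (map uminus V) = map uminus (Phi h \<epsilon> V)"
  by (rule nth_equalityI) (simp_all add: wval_uminus clip_uminus)

lemma mean_le_mean:
  fixes f :: "'a \<Rightarrow> real"
  assumes "finite A" "finite B" "A \<noteq> {}" "B \<noteq> {}"
    and "\<And>x y. x \<in> A - B \<Longrightarrow> y \<in> B \<Longrightarrow> f x \<le> f y"
    and "\<And>x y. x \<in> A \<Longrightarrow> y \<in> B - A \<Longrightarrow> f x \<le> f y"
  shows "sum f A / card A \<le> sum f B / card B"
proof -
  let ?d = "\<lambda>X Y. \<Sum>x\<in>X. \<Sum>y\<in>Y. f y - f x"
  have "sum g B = sum g (A \<inter> B) + sum g (B - A)" for g :: "'a \<Rightarrow> real"
    using sum.Int_Diff[OF \<open>finite B\<close>, of g A] by (simp add: Int_commute)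
  then have split_B: "?d X B = ?d X (A \<inter> B) + ?d X (B - A)" for X
    by (simp add: sum.distrib[symmetric])
  have "?d A B = ?d (A \<inter> B) B + ?d (A - B) B"
    using sum.Int_Diff[OF \<open>finite A\<close>] by blast
  moreover have "?d (A \<inter> B) (A \<inter> B) = 0"
    by (simp add: sum_subtractf sum_distrib_left)
  moreover have "0 \<le> ?d (A \<inter> B) (B - A)" "0 \<le> ?d (A - B) B"
    using assms(5,6) by (auto intro!: sum_nonneg)
  ultimately have "0 \<le> ?d A B"
    using split_B[of "A \<inter> B"] by linarith
  also have "?d A B = card A * sum f B - card B * sum f A"
    by (simp add: sum_subtractf sum_distrib_left)
  finally show ?thesis
    using assms(1-4) by (simp add: divide_simps mult.commute)
qed

lemma wval_diff_ge:
  assumes "0 \<le> h" "0 \<le> \<epsilon>" "k < length V" "l < length V" "V ! k \<le> V ! l"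
  shows "V ! l - V ! k \<le> wval h \<epsilon> V l - wval h \<epsilon> V k"
proof -
  have "(\<Sum>j\<in>nbhd \<epsilon> V k. V ! j) / card (nbhd \<epsilon> V k)
      \<le> (\<Sum>j\<in>nbhd \<epsilon> V l. V ! j) / card (nbhd \<epsilon> V l)"
    by (rule mean_le_mean) (use assms self_in_nbhd finite_nbhd in \<open>fastforce simp: nbhd_def\<close>)+
  then show ?thesis
    unfolding wval_def using assms(1) mult_left_mono by fastforce
qed

lemma Phi_nth_drifts_up:
  assumes "0 \<le> h" "0 \<le> \<epsilon>" "\<epsilon> \<le> 1/2" "k < length V" "1/2 \<le> V ! k"
  shows "min 1 (V ! k + h / (2 * length V)) \<le> Phi h \<epsilon> V ! k"
proof -
  let ?J = "nbhd \<epsilon> V k"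
  have "V ! k \<le> (\<Sum>j\<in>?J. V ! j)"
    by (rule member_le_sum) (use assms self_in_nbhd finite_nbhd in \<open>auto simp: nbhd_def\<close>)
  then have sum_ge: "1/2 \<le> (\<Sum>j\<in>?J. V ! j)"
    using assms by simp
  have card: "0 < card ?J" "card ?J \<le> length V"
    using card_nbhd_pos card_nbhd_le assms by blast+
  have "h / (2 * length V) \<le> h / card ?J * (1/2)"
    using card assms(1) by (simp add: frac_le)
  also have "\<dots> \<le> h / card ?J * (\<Sum>j\<in>?J. V ! j)"
    using sum_ge assms(1) by (intro mult_left_mono) auto
  finally have "V ! k + h / (2 * length V) \<le> wval h \<epsilon> V k"
    unfolding wval_def by simp
  then show ?thesis
    using assms by (auto simp: clip_def)
qed

lemma Phi_nth_eq_one: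
  assumes "0 \<le> h" "0 \<le> \<epsilon>" "\<epsilon> \<le> 1/2" "k < length V" "V ! k = 1"
  shows "Phi h \<epsilon> V ! k = 1"
  using Phi_nth_drifts_up[OF assms(1-4)] assms(1,4,5) clip_bounds(2)[of "wval h \<epsilon> V k"]
  by simp

lemma Phi_nth_eq_minus_one:
  assumes "0 \<le> h" "0 \<le> \<epsilon>" "\<epsilon> \<le> 1/2" "k < length V" "V ! k = -1"
  shows "Phi h \<epsilon> V ! k = -1"
  using Phi_nth_eq_one[of h \<epsilon> k "map uminus V"] assms by (simp add: Phi_uminus)

lemma sum_sum_symmetric_restrict:
  fixes g :: "'a \<Rightarrow> real"
  assumes "finite A" and "\<And>x y. R x y \<longleftrightarrow> R y x"
  shows "(\<Sum>x\<in>A. \<Sum>y\<in>{y \<in> A. R x y}. g y) = (\<Sum>y\<in>A. card {x \<in> A. R y x} * g y)"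
proof -
  have "(\<Sum>x\<in>A. \<Sum>y\<in>{y \<in> A. R x y}. g y) = (\<Sum>y\<in>A. \<Sum>x\<in>{x \<in> A. R x y}. g y)"
    using sum.swap_restrict[OF assms(1) assms(1), of "\<lambda>x y. g y" R] by simp
  also have "\<dots> = (\<Sum>y\<in>A. card {x \<in> A. R y x} * g y)"
    using assms(2) by simp
  finally show ?thesis .
qed

lemma bounded_expanding_eventually_zero:
  fixes s :: "nat \<Rightarrow> real"
  assumes "0 < h" and bounded: "\<And>n. \<bar>s n\<bar> \<le> B"
    and "\<forall>\<^sub>F n in sequentially. s (Suc n) = (1 + h) * s n"
  shows "\<forall>\<^sub>F n in sequentially. s n = 0"
proof -
  obtain M where M: "\<And>n. n \<ge> M \<Longrightarrow> s (Suc n) = (1 + h) * s n"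
    using assms(3) unfolding eventually_sequentially by blast
  have "s n = 0" if "n \<ge> M" for n
  proof (rule ccontr)
    assume "s n \<noteq> 0"
    then have pos: "0 < h * \<bar>s n\<bar>"
      using \<open>0 < h\<close> by simp
    have power: "s (n + m) = (1 + h) ^ m * s n" for m
      using M[of "n + _"] that by (induction m) auto
    obtain m :: nat where "B < m * (h * \<bar>s n\<bar>)"
      using reals_Archimedean3[OF pos] by blast
    also have "\<dots> \<le> (1 + m * h) * \<bar>s n\<bar>"
      by (simp add: algebra_simps)
    also have "\<dots> \<le> (1 + h) ^ m * \<bar>s n\<bar>"
      using Bernoulli_inequality[of h m] \<open>0 < h\<close> by (intro mult_right_mono) auto
    also have "\<dots> = \<bar>s (n + m)\<bar>"
      using \<open>0 < h\<close> by (simp add: power abs_mult)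
    finally show False
      using bounded[of "n + m"] by simp
  qed
  then show ?thesis
    unfolding eventually_sequentially by blast
qed

locale opinion_orbit =
  fixes h \<epsilon> :: real and N :: nat and X :: "nat \<Rightarrow> real list"
  assumes h_pos: "0 < h" and eps_nonneg: "0 \<le> \<epsilon>" and eps_le_half: "\<epsilon> \<le> 1/2"
    and length_init: "length (X 0) = N"
    and init_bounded: "set (X 0) \<subseteq> {-1..1}"
    and orbit_Suc: "X (Suc n) = Phi h \<epsilon> (X n)"
begin

lemma length_orbit [simp]: "length (X n) = N"
  by (induction n) (simp_all add: orbit_Suc length_init)

lemma orbit_bounded: "set (X n) \<subseteq> {-1..1}"
  by (cases n) (simp_all add: init_bounded orbit_Suc set_Phi_bounded)

lemma abs_orbit_le_one: "k < N \<Longrightarrow> \<bar>X n ! k\<bar> \<le> 1"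
  using subsetD[OF orbit_bounded nth_mem, of k n] by (simp add: abs_le_iff)

lemma uminus_orbit: "opinion_orbit h \<epsilon> N (\<lambda>n. map uminus (X n))"
  by unfold_locales
    (use h_pos eps_nonneg eps_le_half length_init init_bounded in \<open>auto simp: orbit_Suc Phi_uminus\<close>)

lemma orbit_stays_at_one:
  assumes "k < N" "X n ! k = 1" "n \<le> m"
  shows "X m ! k = 1"
  using assms(3)
proof (induction m rule: dec_induct)
  case (step m)
  then show ?case
    using Phi_nth_eq_one[of h \<epsilon> k "X m"] h_pos eps_nonneg eps_le_half assms(1)
    by (simp add: orbit_Suc)
qed (use assms(2) in simp)

lemma orbit_stays_on_boundary:
  assumes "k < N" "\<bar>X n ! k\<bar> = 1" "n \<le> m"
  shows "X m ! k = X n ! k"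
proof (cases "X n ! k = 1")
  case True
  then show ?thesis
    using orbit_stays_at_one[OF assms(1) True assms(3)] by simp
next
  case False
  then have "X n ! k = -1"
    using assms(2) by (cases "0 \<le> X n ! k") auto
  then have "map uminus (X n) ! k = 1"
    using assms(1) by simp
  then have "map uminus (X m) ! k = 1"
    by (rule opinion_orbit.orbit_stays_at_one[OF uminus_orbit assms(1) _ assms(3)])
  then show ?thesis
    using \<open>X n ! k = -1\<close> assms(1) by simp
qed

lemma orbit_drifts_up:
  assumes "k < N" "1/2 \<le> X n ! k"
  shows "min 1 (1/2 + m * (h / (2 * N))) \<le> X (n + m) ! k"
proof (induction m)
  case 0
  then show ?case using assms(2) by simp
next
  case (Suc m)
  define x where "x = X (n + m) ! k"
  define \<delta> where "\<delta> = h / (2 * N)"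
  have IH: "min 1 (1/2 + m * \<delta>) \<le> x"
    using Suc by (simp add: x_def \<delta>_def)
  have "0 \<le> \<delta>"
    using h_pos by (simp add: \<delta>_def)
  then have "0 \<le> m * \<delta>"
    by simp
  have "x \<le> 1"
    using abs_orbit_le_one[OF assms(1)] by (simp add: x_def abs_le_iff)
  have "1/2 \<le> x"
    using IH \<open>0 \<le> m * \<delta>\<close> by linarith
  have "min 1 (1/2 + Suc m * \<delta>) \<le> min 1 (x + \<delta>)"
    by (cases "1 \<le> 1/2 + m * \<delta>") (use IH \<open>0 \<le> \<delta>\<close> \<open>x \<le> 1\<close> in \<open>auto simp: algebra_simps\<close>)
  also have "min 1 (x + \<delta>) \<le> X (n + Suc m) ! k"
    using Phi_nth_drifts_up[of h \<epsilon> k "X (n + m)"] h_pos eps_nonneg eps_le_half assms(1) \<open>1/2 \<le> x\<close>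
    by (simp add: orbit_Suc x_def \<delta>_def)
  finally show ?case
    by (simp add: \<delta>_def)
qed

lemma orbit_reaches_one:
  assumes "k < N" "1/2 \<le> X n ! k"
  shows "\<exists>m. X m ! k = 1"
proof -
  define \<delta> where "\<delta> = h / (2 * N)"
  have "0 < \<delta>"
    using h_pos assms(1) by (simp add: \<delta>_def)
  then obtain m :: nat where "1/2 < m * \<delta>"
    using reals_Archimedean3 by blast
  then have "1 \<le> X (n + m) ! k"
    using orbit_drifts_up[OF assms, of m] unfolding \<delta>_def[symmetric] by simp
  then show ?thesis
    using abs_orbit_le_one[OF assms(1), of "n + m"] by auto
qed

lemma orbit_reaches_boundary:
  assumes "k < N" "1/2 \<le> \<bar>X n ! k\<bar>"
  shows "\<exists>m. \<bar>X m ! k\<bar> = 1"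
proof (cases "1/2 \<le> X n ! k")
  case True
  then obtain m where "X m ! k = 1"
    using orbit_reaches_one[OF assms(1)] by blast
  then show ?thesis
    by (intro exI[of _ m]) simp
next
  case False
  then have "1/2 \<le> map uminus (X n) ! k"
    using assms by simp
  then obtain m where "map uminus (X m) ! k = 1"
    using opinion_orbit.orbit_reaches_one[OF uminus_orbit assms(1)] by blast
  then show ?thesis
    using assms(1) by (intro exI[of _ m]) simp
qed

definition free :: "nat set" where
  "free = {k. k < N \<and> (\<forall>n. \<bar>X n ! k\<bar> \<noteq> 1)}"

lemma free_less: "k \<in> free \<Longrightarrow> k < N"
  by (simp add: free_def)

lemma finite_free: "finite free"
  by (rule finite_subset[of _ "{..<N}"]) (auto simp: free_def)

lemma free_small:
  assumes "k \<in> free"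
  shows "\<bar>X n ! k\<bar> < 1/2"
proof (rule ccontr)
  assume "\<not> \<bar>X n ! k\<bar> < 1/2"
  then obtain m where "\<bar>X m ! k\<bar> = 1"
    using orbit_reaches_boundary[OF free_less[OF assms]] by (meson not_less)
  then show False
    using assms by (simp add: free_def)
qed

lemma pinned_eventually_const:
  assumes "k < N" "k \<notin> free"
  obtains c where "\<bar>c\<bar> = 1" "\<forall>\<^sub>F n in sequentially. X n ! k = c"
proof -
  obtain n0 where "\<bar>X n0 ! k\<bar> = 1"
    using assms by (auto simp: free_def)
  then show thesis
    using that[of "X n0 ! k"] orbit_stays_on_boundary[OF assms(1)]
    unfolding eventually_sequentially by blast
qed

lemma free_step:
  assumes "k \<in> free"
  shows "X (Suc n) ! k = wval h \<epsilon> (X n) k"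
proof -
  have "\<bar>clip (wval h \<epsilon> (X n) k)\<bar> < 1"
    using free_small[OF assms, of "Suc n"] free_less[OF assms] by (simp add: orbit_Suc)
  then show ?thesis
    using free_less[OF assms] by (simp add: orbit_Suc clip_def split: if_splits)
qed

lemma free_gap_step:
  assumes "k \<in> free" "l \<in> free" "X n ! k \<le> X n ! l"
  shows "X n ! l - X n ! k \<le> X (Suc n) ! l - X (Suc n) ! k"
  using wval_diff_ge[of h \<epsilon> k "X n" l] assms h_pos eps_nonneg by (simp add: free_step free_less)

lemma free_gap_incseq:
  assumes "k \<in> free" "l \<in> free" "X 0 ! k \<le> X 0 ! l"
  shows "incseq (\<lambda>n. X n ! l - X n ! k)"
proof -
  have ordered: "X 0 ! l - X 0 ! k \<le> X n ! l - X n ! k" for n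
  proof (induction n)
    case (Suc n)
    then show ?case
      using free_gap_step[OF assms(1,2), of n] assms(3) by linarith
  qed simp
  show ?thesis
  proof (rule incseq_SucI)
    fix n
    show "X n ! l - X n ! k \<le> X (Suc n) ! l - X (Suc n) ! k"
      using free_gap_step[OF assms(1,2)] ordered[of n] assms(3) by simp
  qed
qed

lemma free_abs_gap_incseq:
  assumes "k \<in> free" "l \<in> free"
  shows "incseq (\<lambda>n. \<bar>X n ! l - X n ! k\<bar>)"
proof -
  have ordered: "incseq (\<lambda>n. \<bar>X n ! j - X n ! i\<bar>)"
    if "i \<in> free" "j \<in> free" "X 0 ! i \<le> X 0 ! j" for i j
  proof -
    have inc: "incseq (\<lambda>n. X n ! j - X n ! i)"
      using free_gap_incseq[OF that] .
    then have "0 \<le> X n ! j - X n ! i" for n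
      using incseqD[OF inc, of 0 n] that(3) by simp
    then show ?thesis
      using inc by simp
  qed
  show ?thesis
    using ordered[OF assms] ordered[OF assms(2,1)]
    by (cases "X 0 ! k \<le> X 0 ! l") (simp_all add: abs_minus_commute)
qed

lemma free_gap_convergent:
  assumes "k \<in> free" "l \<in> free"
  shows "convergent (\<lambda>n. X n ! l - X n ! k)"
proof -
  have ordered: "convergent (\<lambda>n. X n ! j - X n ! i)"
    if ij: "i \<in> free" "j \<in> free" "X 0 ! i \<le> X 0 ! j" for i j
  proof -
    have "X n ! j - X n ! i \<le> 2" for n
      using abs_orbit_le_one[OF free_less[OF ij(1)], of n] abs_orbit_le_one[OF free_less[OF ij(2)], of n]
      by (simp add: abs_le_iff)
    then obtain L where "(\<lambda>n. X n ! j - X n ! i) \<longlonglongrightarrow> L"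
      using incseq_convergent[OF free_gap_incseq[OF ij], of 2] by blast
    then show ?thesis
      by (auto simp: convergent_def)
  qed
  show ?thesis
    using ordered[OF assms] ordered[OF assms(2,1)] convergent_minus_iff[of "\<lambda>n. X n ! l - X n ! k"]
    by (cases "X 0 ! k \<le> X 0 ! l") simp_all
qed

definition close :: "nat \<Rightarrow> nat \<Rightarrow> bool" where
  "close k l \<longleftrightarrow> (\<forall>n. \<bar>X n ! l - X n ! k\<bar> \<le> \<epsilon>)"

definition cluster :: "nat \<Rightarrow> nat set" where
  "cluster k = {l \<in> free. close k l}"

lemma close_sym: "close k l \<longleftrightarrow> close l k"
  by (simp add: close_def abs_minus_commute)

lemma cluster_subset_free: "cluster k \<subseteq> free"
  by (simp add: cluster_def)

lemma finite_cluster: "finite (cluster k)"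
  using finite_subset[OF cluster_subset_free finite_free] .

lemma self_in_cluster: "k \<in> free \<Longrightarrow> k \<in> cluster k"
  by (simp add: cluster_def close_def eps_nonneg)

lemma card_cluster_pos: "k \<in> free \<Longrightarrow> 0 < card (cluster k)"
  using finite_cluster self_in_cluster card_gt_0_iff by blast

lemma eventually_close_iff:
  assumes "k \<in> free" "l \<in> free"
  shows "\<forall>\<^sub>F n in sequentially. \<bar>X n ! l - X n ! k\<bar> \<le> \<epsilon> \<longleftrightarrow> close k l"
proof (cases "close k l")
  case True
  then show ?thesis
    by (simp add: close_def)
next
  case False
  then obtain m where "\<epsilon> < \<bar>X m ! l - X m ! k\<bar>"
    by (auto simp: close_def not_le)
  then have "\<epsilon> < \<bar>X n ! l - X n ! k\<bar>" if "m \<le> n" for n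
    using incseqD[OF free_abs_gap_incseq[OF assms] that] by linarith
  then show ?thesis
    using False unfolding eventually_sequentially by (auto simp: not_le)
qed

lemma eventually_nbhd_eq_cluster:
  "\<forall>\<^sub>F n in sequentially. \<forall>k\<in>free. nbhd \<epsilon> (X n) k = cluster k"
proof -
  have "\<forall>\<^sub>F n in sequentially. \<forall>l\<in>{..<N} - free. \<bar>X n ! l\<bar> = 1"
  proof (intro eventually_ball_finite ballI)
    fix l assume "l \<in> {..<N} - free"
    then obtain c where "\<bar>c\<bar> = 1" "\<forall>\<^sub>F n in sequentially. X n ! l = c"
      using pinned_eventually_const by blast
    then show "\<forall>\<^sub>F n in sequentially. \<bar>X n ! l\<bar> = 1"
      by (auto elim: eventually_mono)
  qed simp
  moreover have "\<forall>\<^sub>F n in sequentially. \<forall>k\<in>free. \<forall>l\<in>free. \<bar>X n ! l - X n ! k\<bar> \<le> \<epsilon> \<longleftrightarrow> close k l"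
    using eventually_close_iff by (intro eventually_ball_finite finite_free ballI) auto
  ultimately show ?thesis
  proof eventually_elim
    case (elim n)
    show ?case
    proof
      fix k assume k: "k \<in> free"
      have "\<epsilon> < \<bar>X n ! l - X n ! k\<bar>" if "l < N" "l \<notin> free" for l
        using elim(1) that free_small[OF k, of n] eps_le_half by force
      then show "nbhd \<epsilon> (X n) k = cluster k"
        using elim(2) k free_less by (force simp: nbhd_def cluster_def)
    qed
  qed
qed

lemma eventually_linear_step:
  "\<forall>\<^sub>F n in sequentially. \<forall>k\<in>free.
     X (Suc n) ! k = X n ! k + h / card (cluster k) * (\<Sum>l\<in>cluster k. X n ! l)"
  using eventually_nbhd_eq_cluster by eventually_elim (simp add: free_step wval_def)

definition weighted_sum :: "nat \<Rightarrow> real" where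
  "weighted_sum n = (\<Sum>k\<in>free. card (cluster k) * X n ! k)"

lemma eventually_weighted_sum_zero: "\<forall>\<^sub>F n in sequentially. weighted_sum n = 0"
proof (rule bounded_expanding_eventually_zero[OF h_pos])
  show "\<bar>weighted_sum n\<bar> \<le> (\<Sum>k\<in>free. real (card (cluster k)))" for n
    unfolding weighted_sum_def
  proof (rule order_trans[OF sum_abs sum_mono])
    fix k assume "k \<in> free"
    then show "\<bar>card (cluster k) * X n ! k\<bar> \<le> card (cluster k)"
      using abs_orbit_le_one[OF free_less] by (simp add: abs_mult mult_left_le)
  qed
  show "\<forall>\<^sub>F n in sequentially. weighted_sum (Suc n) = (1 + h) * weighted_sum n"
    using eventually_linear_step
  proof eventually_elim
    case (elim n)
    have "weighted_sum (Suc n)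
        = (\<Sum>k\<in>free. card (cluster k) * X n ! k + h * (\<Sum>l\<in>cluster k. X n ! l))"
      unfolding weighted_sum_def using elim card_cluster_pos
      by (intro sum.cong) (auto simp: field_simps)
    also have "\<dots> = weighted_sum n + h * (\<Sum>k\<in>free. \<Sum>l\<in>cluster k. X n ! l)"
      by (simp add: weighted_sum_def sum.distrib sum_distrib_left)
    also have "(\<Sum>k\<in>free. \<Sum>l\<in>cluster k. X n ! l) = weighted_sum n"
      unfolding cluster_def weighted_sum_def
      by (rule sum_sum_symmetric_restrict[OF finite_free close_sym])
    finally show ?case
      by (simp add: algebra_simps)
  qed
qed

lemma free_convergent:
  assumes "k \<in> free"
  shows "convergent (\<lambda>n. X n ! k)"
proof -
  define C where "C = (\<Sum>l\<in>free. real (card (cluster l)))"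
  have "0 < C"
    unfolding C_def using assms card_cluster_pos by (intro sum_pos2[OF finite_free]) auto
  have "(\<lambda>n. (\<Sum>l\<in>free. card (cluster l) * (X n ! k - X n ! l)) / C)
      \<longlonglongrightarrow> (\<Sum>l\<in>free. card (cluster l) * lim (\<lambda>n. X n ! k - X n ! l)) / C"
    using free_gap_convergent[OF _ assms] \<open>0 < C\<close>
    by (intro tendsto_intros) (simp_all add: convergent_LIMSEQ_iff)
  moreover have "\<forall>\<^sub>F n in sequentially.
      (\<Sum>l\<in>free. card (cluster l) * (X n ! k - X n ! l)) / C = X n ! k"
    using eventually_weighted_sum_zero
  proof eventually_elim
    case (elim n)
    have "(\<Sum>l\<in>free. card (cluster l) * (X n ! k - X n ! l)) = C * X n ! k - weighted_sum n"
      by (simp add: C_def weighted_sum_def right_diff_distrib sum_subtractf sum_distrib_right)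
    then show ?case
      using elim \<open>0 < C\<close> by simp
  qed
  ultimately show ?thesis
    unfolding convergent_def by (blast intro: Lim_transform_eventually)
qed

definition orbit_limit :: "real list" where
  "orbit_limit = map (\<lambda>k. lim (\<lambda>n. X n ! k)) [0..<N]"

lemma length_orbit_limit [simp]: "length orbit_limit = N"
  by (simp add: orbit_limit_def)

lemma orbit_tendsto_limit:
  assumes "k < N"
  shows "(\<lambda>n. X n ! k) \<longlonglongrightarrow> orbit_limit ! k"
proof -
  have "convergent (\<lambda>n. X n ! k)"
  proof (cases "k \<in> free")
    case False
    then obtain c where "\<forall>\<^sub>F n in sequentially. X n ! k = c"
      using pinned_eventually_const[OF assms] by blast
    then show ?thesis
      unfolding convergent_def by (blast intro: tendsto_eventually)
  qed (rule free_convergent)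
  then show ?thesis
    using assms by (simp add: orbit_limit_def convergent_LIMSEQ_iff)
qed

lemma orbit_limit_pinned:
  assumes "k < N" "k \<notin> free"
  shows "\<bar>orbit_limit ! k\<bar> = 1"
proof -
  obtain c where "\<bar>c\<bar> = 1" "\<forall>\<^sub>F n in sequentially. X n ! k = c"
    using pinned_eventually_const[OF assms] by blast
  then show ?thesis
    using LIMSEQ_unique[OF orbit_tendsto_limit[OF assms(1)] tendsto_eventually] by blast
qed

lemma close_iff_orbit_limit:
  assumes "k \<in> free" "l \<in> free"
  shows "close k l \<longleftrightarrow> \<bar>orbit_limit ! l - orbit_limit ! k\<bar> \<le> \<epsilon>"
proof -
  have gap: "(\<lambda>n. \<bar>X n ! l - X n ! k\<bar>) \<longlonglongrightarrow> \<bar>orbit_limit ! l - orbit_limit ! k\<bar>"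
    using assms by (intro tendsto_intros orbit_tendsto_limit free_less)
  show ?thesis
  proof
    assume "close k l"
    then show "\<bar>orbit_limit ! l - orbit_limit ! k\<bar> \<le> \<epsilon>"
      by (intro LIMSEQ_le_const2[OF gap]) (simp add: close_def)
  next
    assume "\<bar>orbit_limit ! l - orbit_limit ! k\<bar> \<le> \<epsilon>"
    then show "close k l"
      using incseq_le[OF free_abs_gap_incseq[OF assms] gap] unfolding close_def by (blast intro: order_trans)
  qed
qed

lemma cluster_sum_orbit_limit:
  assumes "k \<in> free"
  shows "(\<Sum>l\<in>cluster k. orbit_limit ! l) = 0"
proof -
  let ?L = "orbit_limit" and ?c = "real (card (cluster k))"
  have "(\<lambda>n. X n ! k + h / ?c * (\<Sum>l\<in>cluster k. X n ! l))
      \<longlonglongrightarrow> ?L ! k + h / ?c * (\<Sum>l\<in>cluster k. ?L ! l)"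
    using assms cluster_subset_free by (intro tendsto_intros orbit_tendsto_limit free_less) auto
  moreover have "\<forall>\<^sub>F n in sequentially.
      X n ! k + h / ?c * (\<Sum>l\<in>cluster k. X n ! l) = X (Suc n) ! k"
    using eventually_linear_step by eventually_elim (use assms in simp)
  ultimately have "(\<lambda>n. X (Suc n) ! k) \<longlonglongrightarrow> ?L ! k + h / ?c * (\<Sum>l\<in>cluster k. ?L ! l)"
    by (rule Lim_transform_eventually)
  then have "?L ! k + h / ?c * (\<Sum>l\<in>cluster k. ?L ! l) = ?L ! k"
    using LIMSEQ_unique LIMSEQ_Suc[OF orbit_tendsto_limit[OF free_less[OF assms]]] by blast
  then show ?thesis
    using h_pos card_cluster_pos[OF assms] by simp
qed

lemma free_orbit_limit_small:
  assumes "k \<in> free"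
  shows "\<bar>orbit_limit ! k\<bar> < 1/2"
proof -
  define a where "a = orbit_limit ! k"
  have "\<bar>a\<bar> \<le> 1/2"
    unfolding a_def using free_small[OF assms]
    by (intro LIMSEQ_le_const2[OF tendsto_rabs[OF orbit_tendsto_limit[OF free_less[OF assms]]]])
      (auto intro: less_imp_le)
  moreover have "\<bar>a\<bar> \<noteq> 1/2"
  proof
    assume "\<bar>a\<bar> = 1/2"
    then have half: "a = 1/2 \<or> a = -1/2"
      by (auto simp: abs_if split: if_splits)
    have "0 \<le> a * orbit_limit ! l" if "l \<in> cluster k" for l
    proof -
      have "\<bar>orbit_limit ! l - a\<bar> \<le> 1/2"
        using that close_iff_orbit_limit[OF assms] eps_le_half by (auto simp: cluster_def a_def)
      then show ?thesis
        using half by (auto simp: abs_if split: if_splits)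
    qed
    then have "a * a \<le> (\<Sum>l\<in>cluster k. a * orbit_limit ! l)"
      using member_le_sum[of k "cluster k" "\<lambda>l. a * orbit_limit ! l"]
        self_in_cluster[OF assms] finite_cluster by (simp add: a_def)
    also have "\<dots> = 0"
      using cluster_sum_orbit_limit[OF assms] by (simp add: sum_distrib_left[symmetric])
    finally show False
      using half by (auto simp: mult_le_0_iff)
  qed
  ultimately show ?thesis
    unfolding a_def by linarith
qed

lemma nbhd_orbit_limit:
  assumes "k \<in> free"
  shows "nbhd \<epsilon> orbit_limit k = cluster k"
proof -
  have "\<epsilon> < \<bar>orbit_limit ! l - orbit_limit ! k\<bar>" if "l < N" "l \<notin> free" for l
    using orbit_limit_pinned[OF that] free_orbit_limit_small[OF assms] eps_le_half by linarith
  then show ?thesis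
    using assms close_iff_orbit_limit free_less by (force simp: nbhd_def cluster_def)
qed

lemma Phi_orbit_limit: "Phi h \<epsilon> orbit_limit = orbit_limit"
proof (rule nth_equalityI)
  fix k assume "k < length (Phi h \<epsilon> orbit_limit)"
  then have "k < N"
    by simp
  show "Phi h \<epsilon> orbit_limit ! k = orbit_limit ! k"
  proof (cases "k \<in> free")
    case True
    then show ?thesis
      using \<open>k < N\<close> free_orbit_limit_small[OF True]
      by (simp add: wval_def nbhd_orbit_limit cluster_sum_orbit_limit clip_eq_self)
  next
    case False
    then have "orbit_limit ! k = 1 \<or> orbit_limit ! k = -1"
      using orbit_limit_pinned[OF \<open>k < N\<close>] by linarith
    then show ?thesis
      using Phi_nth_eq_one Phi_nth_eq_minus_one h_pos eps_nonneg eps_le_half \<open>k < N\<close>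
      by fastforce
  qed
qed simp

theorem orbit_converges_to_fixed_point:
  "\<exists>L. length L = N \<and> Phi h \<epsilon> L = L \<and> (\<forall>k<N. (\<lambda>n. X n ! k) \<longlonglongrightarrow> L ! k)"
  using Phi_orbit_limit orbit_tendsto_limit by (intro exI[of _ orbit_limit]) simp

end

theorem theorem4:
  fixes N :: nat and h \<epsilon> :: real and V0 :: "real list"
  assumes "N \<ge> 1" and "0 < h" and "h < 1" and "0 < \<epsilon>" and "\<epsilon> \<le> 1/2"
    and "length V0 = N"
    and "\<forall>k<N. V0 ! k \<in> {-1..1}"
    and "sorted V0"
  shows "\<exists>L. length L = N \<and> Phi h \<epsilon> L = L \<and>
           (\<forall>k<N. (\<lambda>n. ((Phi h \<epsilon>) ^^ n) V0 ! k) \<longlonglongrightarrow> L ! k)"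
proof -
  interpret opinion_orbit h \<epsilon> N "\<lambda>n. (Phi h \<epsilon> ^^ n) V0"
    using assms by unfold_locales (auto simp: in_set_conv_nth)
  show ?thesis
    using orbit_converges_to_fixed_point by simp
qed

end
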